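(* Let $G$ be a connected graph and let $A\subseteq V(G)$ be such that the distance in $G$ between any two distinct members of $A$ is at least $3$. Then $\tilde{H}_k(\operatorname{ind}(G);\mathbf{k})=0$ for all $k\le|A|-2$.
   Context: All graphs are finite and simple; $\mathbf{k}$ is a fixed field. Distance is the graph (shortest-path) distance. $\operatorname{ind}(G)$ is the simplicial complex on $V(G)$ whose faces are the independent sets of $G$, and $\tilde H_k$ is reduced simplicial homology with coefficients in $\mathbf{k}$. *)

theory Defs
  imports Main
begin

definition simple_graph :: "'a set \<Rightarrow> ('a \<Rightarrow> 'a \<Rightarrow> bool) \<Rightarrow> bool" where
  "simple_graph V E \<longleftrightarrow> finite V \<and> (\<forall>x y. E x y \<longrightarrow> x \<in> V \<and> y \<in> V)
     \<and> (\<forall>x y. E x y \<longrightarrow> E y x) \<and> (\<forall>x. \<not> E x x)"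

fun walk :: "'a set \<Rightarrow> ('a \<Rightarrow> 'a \<Rightarrow> bool) \<Rightarrow> 'a list \<Rightarrow> bool" where
  "walk V E [] = False"
| "walk V E [x] = (x \<in> V)"
| "walk V E (x # y # xs) = (x \<in> V \<and> E x y \<and> walk V E (y # xs))"

definition graph_connected :: "'a set \<Rightarrow> ('a \<Rightarrow> 'a \<Rightarrow> bool) \<Rightarrow> bool" where
  "graph_connected V E \<longleftrightarrow>
     (\<forall>u\<in>V. \<forall>v\<in>V. \<exists>xs. walk V E xs \<and> hd xs = u \<and> last xs = v)"

definition gdist :: "'a set \<Rightarrow> ('a \<Rightarrow> 'a \<Rightarrow> bool) \<Rightarrow> 'a \<Rightarrow> 'a \<Rightarrow> nat" where
  "gdist V E u v = (LEAST n. \<exists>xs. walk V E xs \<and> hd xs = u \<and> last xs = v \<and> length xs = Suc n)"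

definition ind_complex :: "'a set \<Rightarrow> ('a \<Rightarrow> 'a \<Rightarrow> bool) \<Rightarrow> 'a set set" where
  "ind_complex V E = {S. S \<subseteq> V \<and> (\<forall>x\<in>S. \<forall>y\<in>S. \<not> E x y)}"

text \<open>A simplicial complex is given by its set of faces K (including the empty face).
  Simplices are oriented by the linear order on vertices. k-faces have k+1 vertices;
  the empty face is the unique (-1)-face (augmentation), giving reduced homology.\<close>

definition faces_dim :: "'a set set \<Rightarrow> int \<Rightarrow> 'a set set" where
  "faces_dim K k = {\<sigma> \<in> K. int (card \<sigma>) = k + 1}"

definition chains :: "'a set set \<Rightarrow> int \<Rightarrow> ('a set \<Rightarrow> 'k::field) set" where
  "chains K k = {c. \<forall>\<sigma>. \<sigma> \<notin> faces_dim K k \<longrightarrow> c \<sigma> = 0}"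

text \<open>Boundary map from k-chains to (k-1)-chains:
  the coefficient of tau in the boundary of (tau + v) is (-1)^(position of v).\<close>
definition boundary :: "'a::linorder set set \<Rightarrow> int \<Rightarrow> ('a set \<Rightarrow> 'k::field) \<Rightarrow> 'a set \<Rightarrow> 'k" where
  "boundary K k c \<tau> =
     (if \<tau> \<in> faces_dim K (k - 1) then
        (\<Sum>v \<in> {v \<in> \<Union>K. v \<notin> \<tau> \<and> insert v \<tau> \<in> K}.
           (-1) ^ card {w \<in> \<tau>. w < v} * c (insert v \<tau>))
      else 0)"

definition cycles :: "'a::linorder set set \<Rightarrow> int \<Rightarrow> ('a set \<Rightarrow> 'k::field) set" where
  "cycles K k = {c \<in> chains K k. \<forall>\<tau>. boundary K k c \<tau> = 0}"

definition boundaries :: "'a::linorder set set \<Rightarrow> int \<Rightarrow> ('a set \<Rightarrow> 'k::field) set" where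
  "boundaries K k = boundary K (k + 1) ` chains K (k + 1)"

definition reduced_homology_vanishes :: "'k::field itself \<Rightarrow> 'a::linorder set set \<Rightarrow> int \<Rightarrow> bool" where
  "reduced_homology_vanishes (TYPE('k)) K k \<longleftrightarrow>
     (cycles K k :: ('a set \<Rightarrow> 'k) set) \<subseteq> boundaries K k"

end

theory Submission
  imports Defs
begin

text \<open>Induction on the vertex set. A reduced cycle of a simplicial complex K splits, along the
  vertex v, into the cone over a cycle of the link of v and a chain of the deletion of v;
  hence the reduced homology of K vanishes in degree k as soon as that of the deletion vanishes in
  degree k and that of the link in degree k - 1. For an independence complex the deletion of v is
  ind(G - v) and the link is ind(G - N[v]). Pick a \<in> A. If a is isolated, ind(G) is a cone with
  apex a and has no reduced homology. Otherwise take a neighbour v of a: then v \<notin> A, so A survives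
  in G - v, and no other vertex of A is adjacent to v, so A - {a} survives in G - N[v].\<close>

definition simplicial_complex :: "'a set set \<Rightarrow> bool" where
  "simplicial_complex K \<longleftrightarrow> finite (\<Union>K) \<and> (\<forall>\<sigma>\<in>K. \<forall>\<tau>\<subseteq>\<sigma>. \<tau> \<in> K)"

definition extensions :: "'a set set \<Rightarrow> 'a set \<Rightarrow> 'a set" where
  "extensions K \<tau> = {v. v \<notin> \<tau> \<and> insert v \<tau> \<in> K}"

definition incidence_sign :: "'a::linorder \<Rightarrow> 'a set \<Rightarrow> 'k::field" where
  "incidence_sign v \<tau> = (-1) ^ card {w \<in> \<tau>. w < v}"

definition deletion :: "'a set set \<Rightarrow> 'a \<Rightarrow> 'a set set" where
  "deletion K v = {\<sigma> \<in> K. v \<notin> \<sigma>}"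

definition link :: "'a set set \<Rightarrow> 'a \<Rightarrow> 'a set set" where
  "link K v = {\<sigma> \<in> K. v \<notin> \<sigma> \<and> insert v \<sigma> \<in> K}"

lemma incidence_sign_square [simp]: "incidence_sign v \<tau> * incidence_sign v \<tau> = (1::'k::field)"
  unfolding incidence_sign_def by (simp flip: power_add power_mult_distrib)

lemma incidence_sign_nonzero [simp]: "incidence_sign v \<tau> \<noteq> (0::'k::field)"
  unfolding incidence_sign_def by simp

lemma card_less_insert:
  assumes "finite \<sigma>" "v \<notin> \<sigma>"
  shows "card {w \<in> insert v \<sigma>. w < u} = card {w \<in> \<sigma>. w < u} + (if v < u then 1 else 0)"
proof -
  have "{w \<in> insert v \<sigma>. w < u} = (if v < u then insert v {w \<in> \<sigma>. w < u} else {w \<in> \<sigma>. w < u})"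
    by auto
  then show ?thesis using assms by simp
qed

lemma incidence_sign_insert_swap:
  assumes "finite \<sigma>" "u \<notin> \<sigma>" "v \<notin> \<sigma>" "u \<noteq> v"
  shows "incidence_sign u (insert v \<sigma>) * incidence_sign v (insert u \<sigma>)
           = - (incidence_sign u \<sigma> * incidence_sign v \<sigma> :: 'k::field)"
proof -
  have "(u < v) \<noteq> (v < u)" using assms(4) by auto
  then show ?thesis
    unfolding incidence_sign_def card_less_insert[OF assms(1,3)] card_less_insert[OF assms(1,2)]
    by (auto simp: power_add)
qed

lemma simplicial_complex_face_finite: "simplicial_complex K \<Longrightarrow> \<sigma> \<in> K \<Longrightarrow> finite \<sigma>"
  unfolding simplicial_complex_def by (meson Union_upper finite_subset)

lemma simplicial_complex_subset_face: "simplicial_complex K \<Longrightarrow> \<sigma> \<in> K \<Longrightarrow> \<tau> \<subseteq> \<sigma> \<Longrightarrow> \<tau> \<in> K"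
  unfolding simplicial_complex_def by blast

lemma finite_extensions: "simplicial_complex K \<Longrightarrow> finite (extensions K \<tau>)"
  unfolding simplicial_complex_def extensions_def
  by (rule finite_subset[of _ "\<Union>K"]) auto

lemma extensions_mono: "L \<subseteq> K \<Longrightarrow> extensions L \<tau> \<subseteq> extensions K \<tau>"
  unfolding extensions_def by blast

lemma chains_mono: "L \<subseteq> K \<Longrightarrow> chains L k \<subseteq> chains K k"
  unfolding chains_def faces_dim_def by blast

lemma chains_add: "f \<in> chains K k \<Longrightarrow> g \<in> chains K k \<Longrightarrow> (\<lambda>x. f x + g x) \<in> chains K k"
  and chains_diff: "f \<in> chains K k \<Longrightarrow> g \<in> chains K k \<Longrightarrow> (\<lambda>x. f x - g x) \<in> chains K k"
  unfolding chains_def by simp_all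

lemma chain_vanishes_off_faces: "c \<in> chains K k \<Longrightarrow> \<sigma> \<notin> K \<Longrightarrow> c \<sigma> = 0"
  unfolding chains_def faces_dim_def by blast

lemma boundary_add: "boundary K k (\<lambda>x. f x + g x) \<tau> = boundary K k f \<tau> + boundary K k g \<tau>"
  unfolding boundary_def by (simp add: sum.distrib algebra_simps)

lemma boundary_diff: "boundary K k (\<lambda>x. f x - g x) \<tau> = boundary K k f \<tau> - boundary K k g \<tau>"
  unfolding boundary_def by (simp add: sum_subtractf algebra_simps)

text \<open>On chains the dimension test in the definition of the boundary is redundant: a face of the
  wrong dimension only extends to faces of the wrong dimension, where the chain vanishes.\<close>
lemma boundary_chain:
  fixes c :: "'a::linorder set \<Rightarrow> 'k::field"
  assumes K: "simplicial_complex K" and c: "c \<in> chains K k"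
  shows "boundary K k c \<tau> = (\<Sum>u \<in> extensions K \<tau>. incidence_sign u \<tau> * c (insert u \<tau>))"
proof (cases "\<tau> \<in> faces_dim K (k - 1)")
  case True
  have "{v \<in> \<Union>K. v \<notin> \<tau> \<and> insert v \<tau> \<in> K} = extensions K \<tau>"
    unfolding extensions_def by blast
  then show ?thesis using True unfolding boundary_def incidence_sign_def by simp
next
  case False
  have "c (insert u \<tau>) = 0" if u: "u \<in> extensions K \<tau>" for u
  proof -
    have "\<tau> \<in> K" "finite \<tau>" "u \<notin> \<tau>"
      using u K simplicial_complex_subset_face simplicial_complex_face_finite
      unfolding extensions_def by blast+
    then have "insert u \<tau> \<notin> faces_dim K k" using False unfolding faces_dim_def by auto
    then show ?thesis using c unfolding chains_def by blast
  qed
  then show ?thesis using False unfolding boundary_def by simp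
qed

lemma boundary_subcomplex:
  fixes c :: "'a::linorder set \<Rightarrow> 'k::field"
  assumes K: "simplicial_complex K" and L: "simplicial_complex L" and LK: "L \<subseteq> K"
    and c: "c \<in> chains L k"
  shows "boundary L k c \<tau> = boundary K k c \<tau>"
proof -
  have "(\<Sum>u \<in> extensions L \<tau>. incidence_sign u \<tau> * c (insert u \<tau>))
      = (\<Sum>u \<in> extensions K \<tau>. incidence_sign u \<tau> * c (insert u \<tau>))"
    by (rule sum.mono_neutral_left[OF finite_extensions[OF K] extensions_mono[OF LK]])
      (use chain_vanishes_off_faces[OF c] in \<open>auto simp: extensions_def\<close>)
  moreover have "c \<in> chains K k" using c chains_mono[OF LK] by blast
  ultimately show ?thesis using boundary_chain[OF L c] boundary_chain[OF K] by metis
qed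

lemma deletion_subset: "deletion K v \<subseteq> K"
  and link_subset: "link K v \<subseteq> K"
  unfolding deletion_def link_def by auto

lemma simplicial_complex_deletion: "simplicial_complex K \<Longrightarrow> simplicial_complex (deletion K v)"
  unfolding simplicial_complex_def deletion_def by (auto intro: finite_subset)

lemma simplicial_complex_link: "simplicial_complex K \<Longrightarrow> simplicial_complex (link K v)"
  unfolding simplicial_complex_def link_def
  by (auto intro: finite_subset) (meson insert_mono)

lemma chain_link_vanishes:
  "c \<in> chains (link K v) j \<Longrightarrow> v \<in> \<sigma> \<or> insert v \<sigma> \<notin> K \<Longrightarrow> c \<sigma> = 0"
  by (rule chain_vanishes_off_faces) (auto simp: link_def)

definition cone :: "'a::linorder \<Rightarrow> ('a set \<Rightarrow> 'k::field) \<Rightarrow> 'a set \<Rightarrow> 'k" where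
  "cone v c \<rho> = (if v \<in> \<rho> then incidence_sign v (\<rho> - {v}) * c (\<rho> - {v}) else 0)"

definition uncone :: "'a::linorder \<Rightarrow> ('a set \<Rightarrow> 'k::field) \<Rightarrow> 'a set \<Rightarrow> 'k" where
  "uncone v z \<sigma> = (if v \<notin> \<sigma> then incidence_sign v \<sigma> * z (insert v \<sigma>) else 0)"

definition avoiding :: "'a \<Rightarrow> ('a set \<Rightarrow> 'k::field) \<Rightarrow> 'a set \<Rightarrow> 'k" where
  "avoiding v z \<sigma> = (if v \<notin> \<sigma> then z \<sigma> else 0)"

lemma cone_insert [simp]: "v \<notin> \<sigma> \<Longrightarrow> cone v c (insert v \<sigma>) = incidence_sign v \<sigma> * c \<sigma>"
  unfolding cone_def by simp

lemma cone_notin [simp]: "v \<notin> \<rho> \<Longrightarrow> cone v c \<rho> = 0"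
  unfolding cone_def by simp

lemma cone_uncone_avoiding: "z \<rho> = cone v (uncone v z) \<rho> + avoiding v z \<rho>"
proof (cases "v \<in> \<rho>")
  case True
  then have "insert v (\<rho> - {v}) = \<rho>" by auto
  then show ?thesis using True unfolding cone_def uncone_def avoiding_def
    by (simp flip: mult.assoc)
qed (simp add: avoiding_def)

lemma cone_chain:
  assumes K: "simplicial_complex K" and c: "c \<in> chains (link K v) j"
  shows "cone v c \<in> chains K (j + 1)"
  unfolding chains_def
proof safe
  fix \<rho> assume \<rho>: "\<rho> \<notin> faces_dim K (j + 1)"
  show "cone v c \<rho> = 0"
  proof (cases "v \<in> \<rho>")
    case True
    have "c (\<rho> - {v}) = 0"
    proof (rule ccontr)
      assume "c (\<rho> - {v}) \<noteq> 0"
      then have face: "\<rho> - {v} \<in> faces_dim (link K v) j" using c unfolding chains_def by blast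
      then have "\<rho> \<in> K" and fin: "finite (\<rho> - {v})"
        using K simplicial_complex_face_finite insert_Diff[OF True]
        unfolding faces_dim_def link_def by auto
      have "card \<rho> = card (\<rho> - {v}) + 1"
        using card_Suc_Diff1[OF _ True] fin by simp
      with face \<open>\<rho> \<in> K\<close> have "\<rho> \<in> faces_dim K (j + 1)"
        unfolding faces_dim_def link_def by simp
      with \<rho> show False by blast
    qed
    then show ?thesis unfolding cone_def by simp
  qed simp
qed

lemma uncone_chain:
  assumes K: "simplicial_complex K" and z: "z \<in> chains K k"
  shows "uncone v z \<in> chains (link K v) (k - 1)"
  unfolding chains_def
proof safe
  fix \<sigma> assume \<sigma>: "\<sigma> \<notin> faces_dim (link K v) (k - 1)"
  show "uncone v z \<sigma> = 0"
  proof (cases "v \<in> \<sigma>")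
    case False
    have "insert v \<sigma> \<notin> faces_dim K k"
    proof
      assume face: "insert v \<sigma> \<in> faces_dim K k"
      then have "\<sigma> \<in> K" "finite \<sigma>"
        using K simplicial_complex_subset_face simplicial_complex_face_finite
        unfolding faces_dim_def by blast+
      with face False have "\<sigma> \<in> faces_dim (link K v) (k - 1)"
        unfolding faces_dim_def link_def by auto
      with \<sigma> show False by blast
    qed
    then show ?thesis using z unfolding chains_def uncone_def by simp
  qed (simp add: uncone_def)
qed

lemma avoiding_chain: "z \<in> chains K k \<Longrightarrow> avoiding v z \<in> chains (deletion K v) k"
  unfolding chains_def faces_dim_def avoiding_def deletion_def by auto

lemma boundary_cone_off_apex:
  fixes c :: "'a::linorder set \<Rightarrow> 'k::field"
  assumes K: "simplicial_complex K" and c: "c \<in> chains (link K v) j" and v: "v \<notin> \<tau>"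
  shows "boundary K (j + 1) (cone v c) \<tau> = c \<tau>"
proof -
  have "boundary K (j + 1) (cone v c) \<tau>
      = (\<Sum>u \<in> extensions K \<tau>. incidence_sign u \<tau> * cone v c (insert u \<tau>))"
    by (rule boundary_chain[OF K cone_chain[OF K c]])
  also have "\<dots> = (\<Sum>u \<in> extensions K \<tau>. if u = v then c \<tau> else 0)"
    by (rule sum.cong) (auto simp: v mult.assoc[symmetric])
  also have "\<dots> = c \<tau>"
    using chain_link_vanishes[OF c, of \<tau>] v
    by (simp add: finite_extensions[OF K] sum.delta) (auto simp: extensions_def)
  finally show ?thesis .
qed

lemma boundary_cone_at_apex:
  fixes c :: "'a::linorder set \<Rightarrow> 'k::field"
  assumes K: "simplicial_complex K" and c: "c \<in> chains (link K v) j" and v: "v \<notin> \<sigma>"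
  shows "boundary K (j + 1) (cone v c) (insert v \<sigma>)
           = - (incidence_sign v \<sigma> * boundary K j c \<sigma>)"
proof -
  let ?\<tau> = "insert v \<sigma>"
  have "boundary K (j + 1) (cone v c) ?\<tau>
      = (\<Sum>u \<in> extensions K ?\<tau>. incidence_sign u ?\<tau> * cone v c (insert u ?\<tau>))"
    by (rule boundary_chain[OF K cone_chain[OF K c]])
  also have "\<dots> = (\<Sum>u \<in> extensions K ?\<tau>.
      - (incidence_sign v \<sigma> * (incidence_sign u \<sigma> * c (insert u \<sigma>))))"
  proof (rule sum.cong[OF refl])
    fix u assume u: "u \<in> extensions K ?\<tau>"
    then have u\<sigma>: "u \<notin> \<sigma>" "u \<noteq> v" and fin: "finite \<sigma>"
      using simplicial_complex_face_finite[OF K, of "insert u ?\<tau>"]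
      unfolding extensions_def by auto
    have "cone v c (insert u ?\<tau>) = incidence_sign v (insert u \<sigma>) * c (insert u \<sigma>)"
      using u\<sigma> v cone_insert[of v "insert u \<sigma>" c] by (simp add: insert_commute)
    then show "incidence_sign u ?\<tau> * cone v c (insert u ?\<tau>)
        = - (incidence_sign v \<sigma> * (incidence_sign u \<sigma> * c (insert u \<sigma>)))"
      using incidence_sign_insert_swap[OF fin u\<sigma>(1) v u\<sigma>(2), where 'k='k]
      by (simp add: mult.assoc[symmetric])
  qed
  also have "\<dots> = - (incidence_sign v \<sigma> *
      (\<Sum>u \<in> extensions K \<sigma>. incidence_sign u \<sigma> * c (insert u \<sigma>)))"
  proof -
    have "extensions K ?\<tau> \<subseteq> extensions K \<sigma>"
      using K simplicial_complex_subset_face unfolding extensions_def by blast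
    moreover have "c (insert u \<sigma>) = 0" if "u \<in> extensions K \<sigma> - extensions K ?\<tau>" for u
      using that chain_link_vanishes[OF c, of "insert u \<sigma>"]
      unfolding extensions_def by (auto simp: insert_commute)
    ultimately show ?thesis
      by (simp add: sum_negf sum_distrib_left sum.mono_neutral_left[OF finite_extensions[OF K]])
  qed
  also have "\<dots> = - (incidence_sign v \<sigma> * boundary K j c \<sigma>)"
    using boundary_chain[OF K subsetD[OF chains_mono[OF link_subset] c]] by simp
  finally show ?thesis .
qed

text \<open>The cone is a chain homotopy between the identity and zero on chains of the link.\<close>
lemma boundary_cone:
  fixes c :: "'a::linorder set \<Rightarrow> 'k::field"
  assumes K: "simplicial_complex K" and c: "c \<in> chains (link K v) j"
  shows "boundary K (j + 1) (cone v c) \<tau> = c \<tau> - cone v (boundary K j c) \<tau>"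
proof (cases "v \<in> \<tau>")
  case True
  then obtain \<sigma> where \<tau>: "\<tau> = insert v \<sigma>" and v: "v \<notin> \<sigma>"
    by (metis insert_Diff Diff_iff singletonI)
  have "c \<tau> = 0" using chain_link_vanishes[OF c] True by blast
  then show ?thesis using boundary_cone_at_apex[OF K c v] by (simp add: \<tau> v)
qed (simp add: boundary_cone_off_apex[OF K c])

lemma link_subset_deletion: "link K v \<subseteq> deletion K v"
  unfolding link_def deletion_def by blast

lemma boundary_avoiding_vertex:
  assumes "\<forall>\<rho>. v \<in> \<rho> \<longrightarrow> c \<rho> = 0" and "v \<in> \<tau>"
  shows "boundary K k c \<tau> = 0"
  unfolding boundary_def using assms by simp

lemma cycle_split:
  fixes z :: "'a::linorder set \<Rightarrow> 'k::field"
  assumes K: "simplicial_complex K" and z: "z \<in> cycles K k"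
  shows "uncone v z \<in> cycles (link K v) (k - 1)"
    and "uncone v z \<tau> + boundary K k (avoiding v z) \<tau> = 0"
proof -
  define z1 where "z1 = uncone v z"
  define z2 where "z2 = avoiding v z"
  have zc: "z \<in> chains K k" and bz: "\<And>\<tau>. boundary K k z \<tau> = 0"
    using z unfolding cycles_def by auto
  have z1c: "z1 \<in> chains (link K v) (k - 1)"
    unfolding z1_def by (rule uncone_chain[OF K zc])
  have z1v: "\<forall>\<rho>. v \<in> \<rho> \<longrightarrow> z1 \<rho> = 0" and z2v: "\<forall>\<rho>. v \<in> \<rho> \<longrightarrow> z2 \<rho> = 0"
    unfolding z1_def z2_def uncone_def avoiding_def by simp_all
  have eq: "z1 \<tau> - cone v (boundary K (k - 1) z1) \<tau> + boundary K k z2 \<tau> = 0" for \<tau>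
  proof -
    have "z = (\<lambda>\<rho>. cone v z1 \<rho> + z2 \<rho>)"
      unfolding z1_def z2_def using cone_uncone_avoiding by blast
    then have "boundary K k z \<tau> = boundary K k (cone v z1) \<tau> + boundary K k z2 \<tau>"
      by (simp add: boundary_add)
    then show ?thesis using bz boundary_cone[OF K z1c, of \<tau>] by simp
  qed
  have bz1: "boundary K (k - 1) z1 \<sigma> = 0" for \<sigma>
  proof (cases "v \<in> \<sigma>")
    case True then show ?thesis by (rule boundary_avoiding_vertex[OF z1v])
  next
    case False
    have "z1 (insert v \<sigma>) = 0" "boundary K k z2 (insert v \<sigma>) = 0"
      using z1v boundary_avoiding_vertex[OF z2v] by auto
    with eq[of "insert v \<sigma>"] False show ?thesis by simp
  qed
  have "boundary (link K v) (k - 1) z1 \<sigma> = 0" for \<sigma>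
    using bz1 boundary_subcomplex[OF K simplicial_complex_link[OF K] link_subset z1c] by simp
  with z1c show "uncone v z \<in> cycles (link K v) (k - 1)"
    unfolding cycles_def z1_def by simp
  show "uncone v z \<tau> + boundary K k (avoiding v z) \<tau> = 0"
    using eq[of \<tau>] bz1 unfolding z1_def z2_def cone_def by (simp split: if_splits)
qed

lemma avoiding_add_filler_cycle:
  fixes z :: "'a::linorder set \<Rightarrow> 'k::field"
  assumes K: "simplicial_complex K" and z: "z \<in> cycles K k"
    and w: "w \<in> chains (link K v) k" and bw: "boundary K k w = uncone v z"
  shows "(\<lambda>x. avoiding v z x + w x) \<in> cycles (deletion K v) k"
proof -
  have "z \<in> chains K k" using z unfolding cycles_def by blast
  then have chain: "(\<lambda>x. avoiding v z x + w x) \<in> chains (deletion K v) k"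
    using chains_add[OF avoiding_chain subsetD[OF chains_mono[OF link_subset_deletion] w]] by blast
  have "boundary (deletion K v) k (\<lambda>x. avoiding v z x + w x) \<tau> = 0" for \<tau>
    using boundary_subcomplex[OF K simplicial_complex_deletion[OF K] deletion_subset chain]
      cycle_split(2)[OF K z, of v \<tau>] bw
    by (simp add: boundary_add add.commute)
  with chain show ?thesis unfolding cycles_def by blast
qed

lemma reduced_homology_vanishes_link_deletion:
  fixes K :: "'a::linorder set set"
  assumes K: "simplicial_complex K"
    and deletion: "reduced_homology_vanishes TYPE('k::field) (deletion K v) k"
    and link: "reduced_homology_vanishes TYPE('k) (link K v) (k - 1)"
  shows "reduced_homology_vanishes TYPE('k) K k"
  unfolding reduced_homology_vanishes_def
proof
  let ?D = "deletion K v" and ?L = "link K v"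
  fix z :: "'a set \<Rightarrow> 'k" assume z: "z \<in> cycles K k"
  then have "uncone v z \<in> boundaries ?L (k - 1)"
    using cycle_split(1)[OF K z] link unfolding reduced_homology_vanishes_def by blast
  then obtain w1 where w1: "w1 \<in> chains ?L k" and z1: "uncone v z = boundary ?L k w1"
    unfolding boundaries_def by auto
  have bw1: "boundary K k w1 = uncone v z"
    using z1 boundary_subcomplex[OF K simplicial_complex_link[OF K] link_subset w1]
    by (simp add: fun_eq_iff)
  have "(\<lambda>x. avoiding v z x + w1 x) \<in> boundaries ?D k"
    using avoiding_add_filler_cycle[OF K z w1 bw1] deletion
    unfolding reduced_homology_vanishes_def by blast
  then obtain w2 where w2: "w2 \<in> chains ?D (k + 1)"
    and bw2: "(\<lambda>x. avoiding v z x + w1 x) = boundary ?D (k + 1) w2"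
    unfolding boundaries_def by auto
  have "z \<tau> = boundary K (k + 1) (\<lambda>x. w2 x - cone v w1 x) \<tau>" for \<tau>
  proof -
    have "z \<tau> = cone v (uncone v z) \<tau> + avoiding v z \<tau>"
      by (rule cone_uncone_avoiding)
    also have "\<dots> = boundary K (k + 1) w2 \<tau> - boundary K (k + 1) (cone v w1) \<tau>"
      using boundary_cone[OF K w1, of \<tau>] bw1 fun_cong[OF bw2, of \<tau>]
        boundary_subcomplex[OF K simplicial_complex_deletion[OF K] deletion_subset w2, of \<tau>]
      by (simp add: algebra_simps)
    finally show ?thesis by (simp add: boundary_diff)
  qed
  moreover have "(\<lambda>x. w2 x - cone v w1 x) \<in> chains K (k + 1)"
    using chains_diff[OF subsetD[OF chains_mono[OF deletion_subset] w2] cone_chain[OF K w1]] .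
  ultimately show "z \<in> boundaries K k"
    unfolding boundaries_def by (auto simp: fun_eq_iff)
qed

lemma reduced_homology_vanishes_cone:
  fixes K :: "'a::linorder set set"
  assumes K: "simplicial_complex K" and cone: "link K v = deletion K v"
  shows "reduced_homology_vanishes TYPE('k::field) K k"
  unfolding reduced_homology_vanishes_def
proof
  fix z :: "'a set \<Rightarrow> 'k" assume z: "z \<in> cycles K k"
  have "avoiding v z \<in> chains (link K v) k"
    using avoiding_chain[of z K k v] z cone unfolding cycles_def by simp
  note bcone = boundary_cone[OF K this]
  have "z \<tau> = boundary K (k + 1) (cone v (avoiding v z)) \<tau>" for \<tau>
  proof -
    have "cone v (boundary K k (avoiding v z)) \<tau> = - cone v (uncone v z) \<tau>"
      using cycle_split(2)[OF K z, of v "\<tau> - {v}"] unfolding cone_def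
      by (simp add: eq_neg_iff_add_eq_0 add.commute) (metis distrib_left mult_zero_right)
    then show ?thesis using bcone[of \<tau>] cone_uncone_avoiding[of z \<tau> v] by simp
  qed
  moreover have "cone v (avoiding v z) \<in> chains K (k + 1)"
    using cone_chain[OF K \<open>avoiding v z \<in> chains (link K v) k\<close>] .
  ultimately show "z \<in> boundaries K k"
    unfolding boundaries_def by (auto simp: fun_eq_iff)
qed

lemma reduced_homology_vanishes_below:
  assumes "k \<le> -2"
  shows "reduced_homology_vanishes TYPE('k::field) K k"
proof -
  have "chains K k = {\<lambda>_. 0 :: 'k}"
    using assms unfolding chains_def faces_dim_def by auto
  moreover have "(\<lambda>_. 0 :: 'k) \<in> boundaries K k"
    unfolding boundaries_def chains_def
    by (rule image_eqI[where x="\<lambda>_. 0"]) (auto simp: boundary_def fun_eq_iff)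
  ultimately show ?thesis unfolding reduced_homology_vanishes_def cycles_def by auto
qed

lemma simplicial_complex_ind_complex: "finite V \<Longrightarrow> simplicial_complex (ind_complex V E)"
  unfolding simplicial_complex_def ind_complex_def by (auto intro: finite_subset)

lemma deletion_ind_complex: "deletion (ind_complex V E) v = ind_complex (V - {v}) E"
  unfolding deletion_def ind_complex_def by blast

lemma link_ind_complex:
  assumes "symp E" "irreflp E" "v \<in> V"
  shows "link (ind_complex V E) v = ind_complex (V - {v} - {u. E v u}) E"
  using assms unfolding link_def ind_complex_def symp_def irreflp_def by blast

lemma reduced_homology_vanishes_ind_complex_isolated:
  assumes "finite V" "symp E" "irreflp E" "v \<in> V" "\<forall>u\<in>V. \<not> E v u"
  shows "reduced_homology_vanishes TYPE('k::field) (ind_complex V E) k"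
proof (rule reduced_homology_vanishes_cone[OF simplicial_complex_ind_complex[OF assms(1)]])
  have "V - {v} - {u. E v u} = V - {v}" using assms(5) by blast
  then show "link (ind_complex V E) v = deletion (ind_complex V E) v"
    by (simp add: link_ind_complex[OF assms(2-4)] deletion_ind_complex)
qed

definition far_apart :: "('a \<Rightarrow> 'a \<Rightarrow> bool) \<Rightarrow> 'a \<Rightarrow> 'a \<Rightarrow> bool" where
  "far_apart E a b \<longleftrightarrow> \<not> E a b \<and> \<not> (\<exists>c. E a c \<and> E c b)"

lemma far_apart_set_link:
  assumes "irreflp E" "pairwise (far_apart E) A" "A \<subseteq> V" "a \<in> A" "E a v"
  shows "v \<notin> A" and "A - {a} \<subseteq> V - {v} - {u. E v u}"
proof -
  have far: "far_apart E a b" if "b \<in> A" "b \<noteq> a" for b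
    using pairwiseD[OF assms(2,4) that(1)] that(2) by simp
  show "v \<notin> A"
  proof
    assume "v \<in> A"
    moreover have "v \<noteq> a" using assms(1,5) by (auto simp: irreflp_def)
    ultimately show False using far[of v] assms(5) by (simp add: far_apart_def)
  qed
  moreover have "\<not> E v b" if "b \<in> A" "b \<noteq> a" for b
    using far[OF that] assms(5) unfolding far_apart_def by blast
  ultimately show "A - {a} \<subseteq> V - {v} - {u. E v u}"
    using assms(3) by blast
qed

theorem reduced_homology_vanishes_ind_complex:
  fixes V :: "'a::linorder set"
  assumes "finite V" and E: "symp E" "irreflp E"
  shows "A \<subseteq> V \<Longrightarrow> pairwise (far_apart E) A \<Longrightarrow> k \<le> int (card A) - 2 \<Longrightarrow>
    reduced_homology_vanishes TYPE('k::field) (ind_complex V E) k"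
  using assms(1)
proof (induction V arbitrary: A k rule: finite_psubset_induct)
  case (psubset V)
  note K = simplicial_complex_ind_complex[OF psubset.hyps(1), of E]
  show ?case
  proof (cases "k \<le> -2")
    case True then show ?thesis by (rule reduced_homology_vanishes_below)
  next
    case False
    with psubset.prems(3) obtain a where a: "a \<in> A" by fastforce
    show ?thesis
    proof (cases "\<exists>v\<in>V. E a v")
      case False
      with a psubset.prems(1) show ?thesis
        by (intro reduced_homology_vanishes_ind_complex_isolated[OF psubset.hyps(1) E]) auto
    next
      case True
      then obtain v where v: "v \<in> V" "E a v" by blast
      note far = far_apart_set_link[OF E(2) psubset.prems(2,1) a v(2)]
      have "reduced_homology_vanishes TYPE('k) (ind_complex (V - {v}) E) k"
        using psubset.IH[of "V - {v}" A k] psubset.prems far(1) v(1) by blast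
      moreover have "reduced_homology_vanishes TYPE('k) (ind_complex (V - {v} - {u. E v u}) E) (k - 1)"
      proof (rule psubset.IH)
        show "V - {v} - {u. E v u} \<subset> V" using v(1) by blast
        show "pairwise (far_apart E) (A - {a})" using psubset.prems(2) by (rule pairwise_subset) blast
        have "finite A" using psubset.prems(1) psubset.hyps(1) finite_subset by blast
        then show "k - 1 \<le> int (card (A - {a})) - 2"
          using psubset.prems(3) a by (simp add: card_Diff_singleton card_gt_0_iff[symmetric] of_nat_diff)
      qed (rule far(2))
      ultimately show ?thesis
        using reduced_homology_vanishes_link_deletion[OF K, of v k]
        unfolding deletion_ind_complex link_ind_complex[OF E v(1)] by blast
    qed
  qed
qed

lemma gdist_le_walk_length:
  assumes "walk V E xs" "hd xs = u" "last xs = v"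
  shows "gdist V E u v \<le> length xs - 1"
  unfolding gdist_def
  by (rule Least_le) (use assms in \<open>cases xs; auto\<close>)

lemma far_apart_if_gdist_ge_3:
  assumes "simple_graph V E" "a \<in> V" "b \<in> V" "gdist V E a b \<ge> 3"
  shows "far_apart E a b"
  unfolding far_apart_def
proof safe
  have edge_in_V: "E x y \<Longrightarrow> x \<in> V \<and> y \<in> V" for x y
    using assms(1) unfolding simple_graph_def by blast
  show False if "E a b"
    using gdist_le_walk_length[of V E "[a, b]" a b] that edge_in_V assms(4) by simp
  show False if "E a c" "E c b" for c
    using gdist_le_walk_length[of V E "[a, c, b]" a b] that edge_in_V assms(4) by simp
qed

theorem corollary6p12:
  fixes V :: "'a::linorder set" and E :: "'a \<Rightarrow> 'a \<Rightarrow> bool" and A :: "'a set" and k :: int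
  assumes "simple_graph V E"
    and "graph_connected V E"
    and "A \<subseteq> V"
    and "\<forall>u\<in>A. \<forall>v\<in>A. u \<noteq> v \<longrightarrow> gdist V E u v \<ge> 3"
    and "k \<le> int (card A) - 2"
  shows "reduced_homology_vanishes TYPE('k::field) (ind_complex V E) k"
proof -
  have "finite V" "symp E" "irreflp E"
    using assms(1) unfolding simple_graph_def symp_def irreflp_def by auto
  moreover have "pairwise (far_apart E) A"
    using assms(3,4) far_apart_if_gdist_ge_3[OF assms(1)] unfolding pairwise_def by (meson subsetD)
  ultimately show ?thesis
    using reduced_homology_vanishes_ind_complex assms(3,5) by metis
qed

end
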